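(* Let $n$ be a positive integer and let $0 < a_1, a_2, \ldots, a_n \le 1$ be real numbers. Define \[ \alpha = \sum_{j=1}^n \frac{a_j}{1 - \log_2 a_j} - 2\ln 2 . \] Then for every real $\mu$ with $0 < \mu \le 1 - \exp(-\alpha/8)$, there exists a Boolean function $f\colon \{0,1\}^n \to \{0,1\}$ such that \[ \mu \le \mathbb{E}[f(x)] \le \frac{3}{4}\mu + \frac{1}{4} \] and \[ \mathrm{Inf}_j[f] < a_j \quad \text{for all } 1 \le j \le n. \]
   Context: Here $x$ denotes a uniformly random element of $\{0,1\}^n$, and $\mathbb{E}[f(x)]$ is the expectation with respect to it. For $1 \le j \le n$, $x^j$ denotes $x$ with its $j$-th coordinate flipped, i.e. $x^j = (x_1,\dots,x_{j-1},1-x_j,x_{j+1},\dots,x_n)$, and the influence of the $j$-th variable on $f$ is $\mathrm{Inf}_j[f] = \Pr[f(x) \ne f(x^j)]$. $\ln$ is the natural logarithm and $\log_2$ the base-$2$ logarithm. *)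

theory Defs
  imports "HOL-Library.FuncSet" Complex_Main
begin

text \<open>The Boolean cube {0,1}^n, coordinates indexed by 0..n-1 (paper's j = our j+1),
  points represented as extensional functions {..<n} -> bool (True = 1).\<close>
definition cube :: "nat \<Rightarrow> (nat \<Rightarrow> bool) set" where
  "cube n = ({..<n} \<rightarrow>\<^sub>E (UNIV :: bool set))"

definition flip :: "nat \<Rightarrow> (nat \<Rightarrow> bool) \<Rightarrow> (nat \<Rightarrow> bool)" where
  "flip j x = x(j := \<not> x j)"

definition expect :: "nat \<Rightarrow> ((nat \<Rightarrow> bool) \<Rightarrow> bool) \<Rightarrow> real" where
  "expect n f = (\<Sum>x\<in>cube n. (if f x then 1 else 0)) / 2 ^ n"

definition influence :: "nat \<Rightarrow> ((nat \<Rightarrow> bool) \<Rightarrow> bool) \<Rightarrow> nat \<Rightarrow> real" where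
  "influence n f j = real (card {x \<in> cube n. f x \<noteq> f (flip j x)}) / 2 ^ n"

end

theory Submission
  imports Defs "HOL-Analysis.Complex_Transcendental"
begin

text \<open>The function is a tribes function \<open>f x = \<exists>T. \<forall>j\<in>T. x\<^sub>j\<close> over disjoint blocks \<open>T\<close>:
  its mean is \<open>1 - \<Prod>\<^sub>T (1 - 2\<^sup>-\<^sup>|\<^sup>T\<^sup>|)\<close> and a variable of block \<open>T\<close> has influence at
  most \<open>2\<^sup>1\<^sup>-\<^sup>|\<^sup>T\<^sup>|\<close>, so variable \<open>j\<close> may be placed in any block larger than its level
  \<open>c\<^sub>j = \<lfloor>1 - log\<^sub>2 a\<^sub>j\<rfloor>\<close>. Going through the levels \<open>c = 1, 2, \<dots>\<close>, the variables of
  level \<open>c\<close> together with the at most \<open>c - 1\<close> left over from earlier levels are cut into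
  blocks of size \<open>c + 1\<close>. Crediting each variable with \<open>2\<^sup>1\<^sup>-\<^sup>c / c \<ge> a/(1 - log\<^sub>2 a)\<close>,
  a block \<open>T\<close>, worth \<open>8 \<cdot> 2\<^sup>-\<^sup>|\<^sup>T\<^sup>|\<close>, pays for its members, and each level leaves at most
  one credit \<open>2\<^sup>1\<^sup>-\<^sup>c / c\<close> unpaid; as \<open>\<Sum>\<^sub>c 2\<^sup>1\<^sup>-\<^sup>c / c = 2 ln 2\<close> this gives
  \<open>8 \<Sum>\<^sub>T 2\<^sup>-\<^sup>|\<^sup>T\<^sup>| \<ge> \<alpha>\<close>, hence \<open>\<Prod>\<^sub>T (1 - 2\<^sup>-\<^sup>|\<^sup>T\<^sup>|) \<le> exp (-\<alpha>/8) \<le> 1 - \<mu>\<close>.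
  Keeping only the shortest prefix of blocks whose product is at most \<open>1 - \<mu>\<close> gives mean
  at least \<open>\<mu>\<close>; since every factor is at least \<open>3/4\<close>, that product is still at least
  \<open>3/4 \<cdot> (1 - \<mu>)\<close>.\<close>

lemma finite_cube: "finite (cube n)"
  unfolding cube_def by (simp add: finite_PiE)

lemma card_cube: "card (cube n) = 2 ^ n"
  unfolding cube_def by (simp add: card_PiE)

lemma flip_in_cube: "t < n \<Longrightarrow> x \<in> cube n \<Longrightarrow> flip t x \<in> cube n"
  unfolding cube_def flip_def by (auto simp: PiE_iff extensional_def)

lemma flip_flip [simp]: "flip t (flip t x) = x"
  unfolding flip_def by auto

lemma flip_same [simp]: "flip t x t = (\<not> x t)"
  unfolding flip_def by auto

lemma flip_other [simp]: "i \<noteq> t \<Longrightarrow> flip t x i = x i"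
  unfolding flip_def by auto

lemma card_cube_coordinate_true_eq_false:
  assumes "t < n" and inv: "\<And>x. x \<in> cube n \<Longrightarrow> P (flip t x) = P x"
  shows "card {x\<in>cube n. P x \<and> x t} = card {x\<in>cube n. P x \<and> \<not> x t}"
proof (rule bij_betw_same_card)
  show "bij_betw (flip t) {x\<in>cube n. P x \<and> x t} {x\<in>cube n. P x \<and> \<not> x t}"
    by (rule bij_betw_byWitness[where f'="flip t"])
       (auto simp: flip_in_cube[OF assms(1)] inv image_def
             intro!: exI[where x="flip t _"] flip_in_cube[OF assms(1)])
qed

lemma card_cube_true_on_mult:
  assumes "S \<subseteq> {..<n}"
    and "\<And>t x. t \<in> S \<Longrightarrow> x \<in> cube n \<Longrightarrow> P (flip t x) = P x"
  shows "card {x\<in>cube n. P x \<and> (\<forall>i\<in>S. x i)} * 2 ^ card S = card {x\<in>cube n. P x}"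
proof -
  have "finite S" using assms(1) finite_subset by blast
  then show ?thesis
    using assms
  proof (induction S rule: finite_induct)
    case empty
    then show ?case by simp
  next
    case (insert t S)
    let ?Q = "\<lambda>x. P x \<and> (\<forall>i\<in>S. x i)"
    have "?Q (flip t x) = ?Q x" if "x \<in> cube n" for x
      using insert.prems(2)[of t x] that insert.hyps(2) by (metis flip_other insertI1)
    then have halves: "card {x\<in>cube n. ?Q x \<and> x t} = card {x\<in>cube n. ?Q x \<and> \<not> x t}"
      using card_cube_coordinate_true_eq_false[of t n ?Q] insert.prems(1) by blast
    have "{x\<in>cube n. ?Q x} = {x\<in>cube n. ?Q x \<and> x t} \<union> {x\<in>cube n. ?Q x \<and> \<not> x t}" by auto
    then have "card {x\<in>cube n. ?Q x}
        = card {x\<in>cube n. ?Q x \<and> x t} + card {x\<in>cube n. ?Q x \<and> \<not> x t}"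
      by (simp add: card_Un_disjoint finite_cube disjoint_iff)
    with halves have "card {x\<in>cube n. ?Q x} = 2 * card {x\<in>cube n. ?Q x \<and> x t}" by simp
    moreover have "card {x\<in>cube n. ?Q x} * 2 ^ card S = card {x\<in>cube n. P x}"
      using insert by auto
    moreover have "{x\<in>cube n. P x \<and> (\<forall>i\<in>insert t S. x i)} = {x\<in>cube n. ?Q x \<and> x t}"
      by auto
    ultimately show ?case using insert.hyps by (simp add: mult.assoc mult.commute)
  qed
qed

lemma card_cube_true_on:
  assumes "S \<subseteq> {..<n}"
  shows "real (card {x\<in>cube n. \<forall>i\<in>S. x i}) = 2 ^ n / 2 ^ card S"
proof -
  have "card {x\<in>cube n. \<forall>i\<in>S. x i} * 2 ^ card S = 2 ^ n"
    using card_cube_true_on_mult[OF assms, of "\<lambda>x. True"] by (simp add: card_cube)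
  from arg_cong[where f = real, OF this]
  have "real (card {x\<in>cube n. \<forall>i\<in>S. x i}) * 2 ^ card S = 2 ^ n" by simp
  then show ?thesis by (simp add: field_simps)
qed

definition tribes :: "nat set list \<Rightarrow> (nat \<Rightarrow> bool) \<Rightarrow> bool" where
  "tribes Ts x \<longleftrightarrow> (\<exists>T\<in>set Ts. \<forall>j\<in>T. x j)"

lemma tribes_flip: "t \<notin> \<Union>(set Ts) \<Longrightarrow> tribes Ts (flip t x) = tribes Ts x"
  unfolding tribes_def by (metis UnionI flip_other)

lemma card_cube_not_tribes:
  assumes "sorted_wrt disjnt Ts" "\<Union>(set Ts) \<subseteq> {..<n}"
  shows "real (card {x\<in>cube n. \<not> tribes Ts x}) = 2 ^ n * (\<Prod>T\<leftarrow>Ts. 1 - (1/2) ^ card T)"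
  using assms
proof (induction Ts)
  case Nil
  then show ?case by (simp add: tribes_def card_cube)
next
  case (Cons T Ts)
  let ?A = "{x\<in>cube n. \<not> tribes Ts x}"
  let ?B = "{x\<in>cube n. \<not> tribes Ts x \<and> (\<forall>i\<in>T. x i)}"
  have "card ?B * 2 ^ card T = card ?A"
  proof (rule card_cube_true_on_mult)
    show "T \<subseteq> {..<n}" using Cons.prems(2) by auto
    fix t x assume "t \<in> T"
    then have "t \<notin> \<Union>(set Ts)" using Cons.prems(1) by (auto simp: disjnt_def)
    then show "(\<not> tribes Ts (flip t x)) = (\<not> tribes Ts x)" by (simp add: tribes_flip)
  qed
  from arg_cong[where f = real, OF this]
  have "real (card ?B) * 2 ^ card T = real (card ?A)" by simp
  then have B: "real (card ?B) = real (card ?A) * (1/2) ^ card T"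
    by (simp add: field_simps power_one_over)
  have "?A = ?B \<union> {x\<in>cube n. \<not> tribes (T # Ts) x}"
    by (auto simp: tribes_def)
  then have "card ?A = card ?B + card {x\<in>cube n. \<not> tribes (T # Ts) x}"
    by (subst card_Un_disjoint[symmetric]) (auto simp: finite_cube tribes_def)
  then have "real (card {x\<in>cube n. \<not> tribes (T # Ts) x}) = real (card ?A) * (1 - (1/2) ^ card T)"
    using B by (simp add: algebra_simps)
  then show ?case using Cons by simp
qed

lemma expect_tribes:
  assumes "sorted_wrt disjnt Ts" "\<Union>(set Ts) \<subseteq> {..<n}"
  shows "expect n (tribes Ts) = 1 - (\<Prod>T\<leftarrow>Ts. 1 - (1/2) ^ card T)"
proof -
  have "card (cube n) = card {x\<in>cube n. tribes Ts x} + card {x\<in>cube n. \<not> tribes Ts x}"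
    by (subst card_Un_disjoint[symmetric]) (auto simp: finite_cube intro: arg_cong[where f=card])
  then have "real (card (cube n)) = card {x\<in>cube n. tribes Ts x} + card {x\<in>cube n. \<not> tribes Ts x}"
    by simp
  then have "real (card {x\<in>cube n. tribes Ts x}) = 2 ^ n - 2 ^ n * (\<Prod>T\<leftarrow>Ts. 1 - (1/2) ^ card T)"
    using card_cube_not_tribes[OF assms] by (simp add: card_cube)
  moreover have "(\<Sum>x\<in>cube n. (if tribes Ts x then 1 else 0::real)) = card {x\<in>cube n. tribes Ts x}"
    by (simp add: sum.If_cases finite_cube Int_def)
  ultimately show ?thesis unfolding expect_def by (simp add: field_simps)
qed

lemma sorted_wrt_disjnt_unique:
  "sorted_wrt disjnt Ts \<Longrightarrow> T \<in> set Ts \<Longrightarrow> T' \<in> set Ts \<Longrightarrow> j \<in> T \<Longrightarrow> j \<in> T' \<Longrightarrow> T' = T"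
  by (induction Ts) (auto simp: disjnt_def)

lemma influence_tribes_le:
  assumes "sorted_wrt disjnt Ts" "\<Union>(set Ts) \<subseteq> {..<n}" "T \<in> set Ts" "j \<in> T"
  shows "influence n (tribes Ts) j \<le> 1 / 2 ^ (card T - 1)"
proof -
  have "\<forall>i\<in>T-{j}. x i" if "tribes Ts x \<noteq> tribes Ts (flip j x)" for x
  proof -
    from that obtain T' where "T' \<in> set Ts" "j \<in> T'" "\<forall>i\<in>T'-{j}. x i"
      unfolding tribes_def by (metis DiffE flip_other singletonI)
    then show ?thesis using sorted_wrt_disjnt_unique[OF assms(1,3)] assms(4) by blast
  qed
  then have "{x\<in>cube n. tribes Ts x \<noteq> tribes Ts (flip j x)} \<subseteq> {x\<in>cube n. \<forall>i\<in>T-{j}. x i}"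
    by blast
  then have "card {x\<in>cube n. tribes Ts x \<noteq> tribes Ts (flip j x)} \<le> card {x\<in>cube n. \<forall>i\<in>T-{j}. x i}"
    by (rule card_mono[rotated]) (simp add: finite_cube)
  also have "real \<dots> = 2 ^ n / 2 ^ (card T - 1)"
    using card_cube_true_on[of "T - {j}" n] assms(2-4) by auto
  finally show ?thesis unfolding influence_def by (simp add: field_simps)
qed

lemma influence_tribes_outside: "j \<notin> \<Union>(set Ts) \<Longrightarrow> influence n (tribes Ts) j = 0"
  unfolding influence_def by (simp add: tribes_flip)

lemma influence_tribes_less:
  assumes "sorted_wrt disjnt Ts" "\<Union>(set Ts) \<subseteq> {..<n}"
    and "\<forall>T\<in>set Ts. \<forall>i\<in>T. 1 / 2 ^ (card T - 1) < a i" "0 < a j"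
  shows "influence n (tribes Ts) j < a j"
proof (cases "j \<in> \<Union>(set Ts)")
  case True
  then obtain T where T: "T \<in> set Ts" "j \<in> T" by blast
  then have "1 / 2 ^ (card T - 1) < a j" using assms(3) by blast
  moreover have "influence n (tribes Ts) j \<le> 1 / 2 ^ (card T - 1)"
    by (rule influence_tribes_le[OF assms(1,2) T])
  ultimately show ?thesis by linarith
next
  case False
  then show ?thesis using influence_tribes_outside[OF False] assms(4) by simp
qed

definition tribes_weight :: "'a set list \<Rightarrow> real" where
  "tribes_weight Ts = (\<Sum>T\<leftarrow>Ts. (1/2) ^ card T)"

lemma prod_one_minus_le_exp_tribes_weight:
  "(\<Prod>T\<leftarrow>Ts. 1 - (1/2::real) ^ card T) \<le> exp (- tribes_weight Ts)"
proof (induction Ts)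
  case Nil
  then show ?case by (simp add: tribes_weight_def)
next
  case (Cons T Ts)
  have "1 - (1/2::real) ^ card T \<le> exp (- ((1/2) ^ card T))"
    using exp_ge_add_one_self[of "- ((1/2::real) ^ card T)"] by simp
  moreover have "0 \<le> (\<Prod>T\<leftarrow>Ts. 1 - (1/2::real) ^ card T)"
    by (rule prod_list_nonneg) (auto simp: power_le_one)
  ultimately have "(\<Prod>T\<leftarrow>T # Ts. 1 - (1/2::real) ^ card T)
      \<le> exp (- ((1/2) ^ card T)) * exp (- tribes_weight Ts)"
    using Cons.IH by (simp add: mult_mono)
  then show ?case by (simp add: tribes_weight_def exp_add[symmetric])
qed

text \<open>\<open>level_weight 0 = 0\<close> (division by zero), so variables of level 0 carry no credit.\<close>
definition level_weight :: "nat \<Rightarrow> real" where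
  "level_weight c = 2 / (2 ^ c * real c)"

lemma level_weight_nonneg: "0 \<le> level_weight c"
  unfolding level_weight_def by simp

lemma level_weight_Suc_le: "1 \<le> c \<Longrightarrow> level_weight (Suc c) \<le> level_weight c"
  unfolding level_weight_def by (intro divide_left_mono mult_mono) auto

lemma block_level_weight_le: "real (c + 2) * level_weight (Suc c) \<le> 8 * (1/2) ^ (c + 2)"
proof -
  have "real (c + 2) * level_weight (Suc c) = real (c + 2) / real (c + 1) * (1/2) ^ c"
    unfolding level_weight_def by (simp add: power_one_over)
  also have "\<dots> \<le> 2 * (1/2) ^ c"
    by (intro mult_right_mono) (auto simp: field_simps)
  also have "\<dots> = 8 * (1/2) ^ (c + 2)"
    by (simp add: power_add)
  finally show ?thesis .
qed

lemma sum_level_weight_le: "(\<Sum>i\<le>C. level_weight i) \<le> 2 * ln 2"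
proof -
  have "(\<lambda>i. - ((- (- 1/2::real)) ^ i) / of_nat i) sums ln (1 + (- 1/2))"
    by (rule ln_series') simp
  from sums_minus[OF this] have ln2: "(\<lambda>i. (1/2::real) ^ i / of_nat i) sums ln 2"
    by (simp add: ln_div)
  have "(\<Sum>i\<le>C. level_weight i) = 2 * (\<Sum>i\<le>C. (1/2::real) ^ i / of_nat i)"
    unfolding level_weight_def sum_distrib_left by (rule sum.cong) (auto simp: power_one_over)
  also have "\<dots> \<le> 2 * ln 2"
    using sum_le_suminf[OF sums_summable[OF ln2], of "{..C}"] sums_unique[OF ln2] by simp
  finally show ?thesis .
qed

lemma div_one_minus_log_le_level_weight:
  fixes a :: real
  assumes "0 < a" "a \<le> 1"
  shows "a / (1 - log 2 a) \<le> level_weight (nat \<lfloor>1 - log 2 a\<rfloor>)"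
proof -
  define L where "L = 1 - log 2 a"
  define c where "c = nat \<lfloor>L\<rfloor>"
  have "1 \<le> L" using assms unfolding L_def by simp
  then have "1 \<le> c" "real c \<le> L" unfolding c_def by linarith+
  have "a = 2 powr (1 - L)" using assms unfolding L_def by simp
  also have "\<dots> \<le> 2 powr (1 - real c)" using \<open>real c \<le> L\<close> by simp
  also have "\<dots> = 2 / 2 ^ c" by (simp add: powr_diff powr_realpow)
  finally have "a / L \<le> (2 / 2 ^ c) / real c"
    using \<open>1 \<le> c\<close> \<open>real c \<le> L\<close> assms(1) by (intro frac_le) auto
  then show ?thesis unfolding level_weight_def c_def L_def by (simp add: field_simps)
qed

lemma inverse_power_less_if_floor_less:
  fixes a :: real
  assumes "0 < a" "a \<le> 1" "nat \<lfloor>1 - log 2 a\<rfloor> < k"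
  shows "1 / 2 ^ (k - 1) < a"
proof -
  have "1 - log 2 a < real k" using assms by linarith
  then have "2 powr (1 - real k) < 2 powr (log 2 a)" by (intro powr_less_mono) auto
  moreover have "2 powr (1 - real k) = 1 / 2 ^ (k - 1)"
    using assms(3) by (simp add: powr_diff powr_realpow of_nat_diff power_diff)
  ultimately show ?thesis using assms(1) by simp
qed

lemma split_into_blocks:
  assumes "finite P" "0 < k"
  shows "\<exists>Bs R. sorted_wrt disjnt Bs \<and> (\<forall>B\<in>set Bs. B \<subseteq> P \<and> card B = k)
    \<and> length Bs = card P div k \<and> R \<subseteq> P \<and> disjnt R (\<Union>(set Bs)) \<and> card R = card P mod k"
  using assms
proof (induction "card P" arbitrary: P rule: less_induct)
  case less
  show ?case
  proof (cases "card P < k")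
    case True
    then show ?thesis by (intro exI[of _ "[]"] exI[of _ P]) auto
  next
    case False
    then obtain B where B: "B \<subseteq> P" "card B = k" by (meson not_less obtain_subset_with_card_n)
    then have card_rest: "card (P - B) = card P - k"
      using less.prems(1) by (simp add: card_Diff_subset finite_subset)
    then obtain Bs R where IH: "sorted_wrt disjnt Bs" "\<forall>B'\<in>set Bs. B' \<subseteq> P - B \<and> card B' = k"
      "length Bs = card (P - B) div k" "R \<subseteq> P - B" "disjnt R (\<Union>(set Bs))"
      "card R = card (P - B) mod k"
      using less.hyps[of "P - B"] less.prems False by auto
    have "card P div k = Suc (length Bs)" "card P mod k = card R"
      using IH(3,6) card_rest False less.prems(2) le_div_geq le_mod_geq by auto
    then show ?thesis
      using IH B by (intro exI[of _ "B # Bs"] exI[of _ R]) (auto simp: disjnt_def)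
  qed
qed

text \<open>\<open>Ts\<close> are the tribes built from the variables of level at most \<open>c\<close>;
  the leftover variables \<open>R\<close> are carried to the next level.\<close>
definition grouped_below :: "'a set \<Rightarrow> ('a \<Rightarrow> nat) \<Rightarrow> nat \<Rightarrow> 'a set list \<Rightarrow> 'a set \<Rightarrow> bool" where
  "grouped_below V cl c Ts R \<longleftrightarrow> sorted_wrt disjnt Ts \<and> \<Union>(set Ts) \<subseteq> {j\<in>V. cl j \<le> c}
     \<and> (\<forall>T\<in>set Ts. 2 \<le> card T \<and> (\<forall>j\<in>T. cl j < card T))
     \<and> R \<subseteq> {j\<in>V. cl j \<le> c} \<and> disjnt R (\<Union>(set Ts)) \<and> card R \<le> c"

lemma grouped_below_Suc:
  assumes "grouped_below V cl c Ts R"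
    and "sorted_wrt disjnt Bs" "\<forall>B\<in>set Bs. B \<subseteq> R \<union> {j\<in>V. cl j = Suc c} \<and> card B = c + 2"
    and "R' \<subseteq> R \<union> {j\<in>V. cl j = Suc c}" "disjnt R' (\<Union>(set Bs))" "card R' \<le> Suc c"
  shows "grouped_below V cl (Suc c) (Bs @ Ts) R'"
proof -
  have "disjnt (R \<union> {j\<in>V. cl j = Suc c}) (\<Union>(set Ts))"
    using assms(1) unfolding grouped_below_def disjnt_def by fastforce
  then have "\<forall>B\<in>set Bs. \<forall>T\<in>set Ts. disjnt B T" "disjnt R' (\<Union>(set Ts))"
    using assms(3,4) by (auto simp: disjnt_def)
  moreover have "\<forall>B\<in>set Bs. \<forall>j\<in>B. cl j < card B"
    using assms(1,3) unfolding grouped_below_def by fastforce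
  ultimately show ?thesis
    using assms unfolding grouped_below_def by (fastforce simp: sorted_wrt_append)
qed

text \<open>Accounting for one level: the \<open>N\<close> new variables add \<open>N \<cdot> level_weight (c + 1)\<close>,
  each of the \<open>q\<close> new tribes of size \<open>c + 2\<close> pays for \<open>c + 2\<close> of them, and the
  \<open>r \<le> c\<close> carried variables were already credited at the larger rate \<open>level_weight c\<close>.\<close>
lemma level_weight_carry_step:
  fixes D :: real and q r r' N c :: nat
  assumes "D \<le> (\<Sum>i\<le>c. level_weight i) - (real c - real r) * level_weight c"
    and "r \<le> c" and "q * (c + 2) + r' = r + N"
  shows "D + real N * level_weight (Suc c) - 8 * (real q * (1/2) ^ (c + 2))
    \<le> (\<Sum>i\<le>Suc c. level_weight i) - (real (Suc c) - real r') * level_weight (Suc c)"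
proof -
  let ?U = "level_weight (Suc c)"
  have "real q * (c + 2) + real r' = real r + real N"
    using assms(3) by (metis of_nat_add of_nat_mult)
  then have count: "real N - real q * (c + 2) = real r' - real r" by linarith
  have "(real c - real r) * ?U \<le> (real c - real r) * level_weight c"
    using assms(2) by (cases c) (auto intro!: mult_left_mono level_weight_Suc_le)
  moreover have "real q * (real (c + 2) * ?U) \<le> real q * (8 * (1/2) ^ (c + 2))"
    by (intro mult_left_mono block_level_weight_le) simp
  ultimately have "D + real N * ?U - 8 * (real q * (1/2) ^ (c + 2))
      \<le> (\<Sum>i\<le>c. level_weight i) + (real N - real q * (c + 2) - (real c - real r)) * ?U"
    using assms(1) by (simp add: algebra_simps)
  also have "\<dots> = (\<Sum>i\<le>Suc c. level_weight i) - (real (Suc c) - real r') * ?U"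
    unfolding count by (simp add: algebra_simps)
  finally show ?thesis .
qed

lemma exists_grouped_below:
  assumes "finite V"
  shows "\<exists>Ts R. grouped_below V cl c Ts R \<and>
    (\<Sum>j | j \<in> V \<and> cl j \<le> c. level_weight (cl j)) - 8 * tribes_weight Ts
      \<le> (\<Sum>i\<le>c. level_weight i) - (real c - real (card R)) * level_weight c"
proof (induction c)
  case 0
  show ?case
    by (intro exI[of _ "[]"] exI[of _ "{}"])
       (simp add: grouped_below_def tribes_weight_def level_weight_def)
next
  case (Suc c)
  then obtain Ts R where grouped: "grouped_below V cl c Ts R" and
    IH: "(\<Sum>j | j \<in> V \<and> cl j \<le> c. level_weight (cl j)) - 8 * tribes_weight Ts
      \<le> (\<Sum>i\<le>c. level_weight i) - (real c - real (card R)) * level_weight c"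
    by blast
  define New where "New = {j\<in>V. cl j = Suc c}"
  have "R \<subseteq> V" "disjnt R New" "card R \<le> c"
    using grouped unfolding grouped_below_def New_def disjnt_def by auto
  then have "finite (R \<union> New)"
    using assms finite_subset unfolding New_def by auto
  then obtain Bs R' where Bs: "sorted_wrt disjnt Bs" "\<forall>B\<in>set Bs. B \<subseteq> R \<union> New \<and> card B = c + 2"
    "length Bs = card (R \<union> New) div (c + 2)" "R' \<subseteq> R \<union> New" "disjnt R' (\<Union>(set Bs))"
    "card R' = card (R \<union> New) mod (c + 2)"
    using split_into_blocks[of "R \<union> New" "c + 2"] by auto
  have count: "length Bs * (c + 2) + card R' = card R + card New"
    using Bs(3,6) div_mult_mod_eq[of "card (R \<union> New)" "c + 2"] \<open>finite (R \<union> New)\<close> \<open>disjnt R New\<close>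
    by (simp add: card_Un_disjoint disjnt_def)
  have "grouped_below V cl (Suc c) (Bs @ Ts) R'"
    using grouped_below_Suc[OF grouped Bs(1)] Bs(2,4-6) unfolding New_def by auto
  moreover have "(\<Sum>j | j \<in> V \<and> cl j \<le> Suc c. level_weight (cl j))
      = (\<Sum>j | j \<in> V \<and> cl j \<le> c. level_weight (cl j)) + real (card New) * level_weight (Suc c)"
  proof -
    have levels: "{j\<in>V. cl j \<le> Suc c} = {j\<in>V. cl j \<le> c} \<union> New" unfolding New_def by auto
    have "(\<Sum>j | j \<in> V \<and> cl j \<le> Suc c. level_weight (cl j))
        = (\<Sum>j | j \<in> V \<and> cl j \<le> c. level_weight (cl j)) + (\<Sum>j\<in>New. level_weight (cl j))"
      unfolding levels by (rule sum.union_disjoint) (use assms in \<open>auto simp: New_def\<close>)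
    then show ?thesis unfolding New_def by simp
  qed
  moreover have "tribes_weight (Bs @ Ts) = tribes_weight Ts + real (length Bs) * (1/2) ^ (c + 2)"
    using Bs(2) unfolding tribes_weight_def by (induction Bs) (auto simp: algebra_simps)
  moreover note level_weight_carry_step[OF IH \<open>card R \<le> c\<close> count]
  ultimately show ?case by (intro exI[of _ "Bs @ Ts"] exI[of _ R']) (simp add: algebra_simps)
qed

lemma exists_tribes_family:
  fixes a :: "'a \<Rightarrow> real"
  assumes "finite V" "\<forall>j\<in>V. 0 < a j \<and> a j \<le> 1"
  shows "\<exists>Ts. sorted_wrt disjnt Ts \<and> \<Union>(set Ts) \<subseteq> V
    \<and> (\<forall>T\<in>set Ts. 2 \<le> card T \<and> (\<forall>j\<in>T. 1 / 2 ^ (card T - 1) < a j))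
    \<and> (\<Sum>j\<in>V. a j / (1 - log 2 (a j))) - 2 * ln 2 \<le> 8 * tribes_weight Ts"
proof -
  define cl where "cl j = nat \<lfloor>1 - log 2 (a j)\<rfloor>" for j
  define C where "C = Max (cl ` V)"
  have "cl j \<le> C" if "j \<in> V" for j
    unfolding C_def using assms(1) that by (intro Max_ge) auto
  then have all_levels: "{j\<in>V. cl j \<le> C} = V" by blast
  obtain Ts R where grouped: "grouped_below V cl C Ts R" and
    weight: "(\<Sum>j\<in>V. level_weight (cl j)) - 8 * tribes_weight Ts
      \<le> (\<Sum>i\<le>C. level_weight i) - (real C - real (card R)) * level_weight C"
    using exists_grouped_below[OF assms(1), of cl C] unfolding all_levels by blast
  have "card R \<le> C" using grouped unfolding grouped_below_def by simp
  then have "0 \<le> (real C - real (card R)) * level_weight C"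
    by (simp add: level_weight_nonneg)
  moreover have "(\<Sum>j\<in>V. a j / (1 - log 2 (a j))) \<le> (\<Sum>j\<in>V. level_weight (cl j))"
    unfolding cl_def by (rule sum_mono) (use assms(2) div_one_minus_log_le_level_weight in auto)
  ultimately have "(\<Sum>j\<in>V. a j / (1 - log 2 (a j))) - 2 * ln 2 \<le> 8 * tribes_weight Ts"
    using weight sum_level_weight_le[of C] by linarith
  moreover have "\<forall>T\<in>set Ts. \<forall>j\<in>T. 1 / 2 ^ (card T - 1) < a j"
  proof (intro ballI)
    fix T j assume "T \<in> set Ts" "j \<in> T"
    with grouped have "j \<in> V" "cl j < card T" unfolding grouped_below_def by auto
    then show "1 / 2 ^ (card T - 1) < a j"
      using assms(2) inverse_power_less_if_floor_less[of "a j" "card T"] unfolding cl_def by simp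
  qed
  ultimately show ?thesis
    using grouped unfolding grouped_below_def by (intro exI[of _ Ts]) auto
qed

lemma prod_list_take_between:
  fixes xs :: "real list"
  assumes "0 \<le> c" "\<forall>x\<in>set xs. c \<le> x" "prod_list xs \<le> b" "0 \<le> b" "b < 1"
  shows "\<exists>m \<le> length xs. prod_list (take m xs) \<le> b \<and> c * b \<le> prod_list (take m xs)"
  using assms(2,3)
proof (induction xs rule: rev_induct)
  case Nil
  then show ?case using assms(5) by simp
next
  case (snoc x xs)
  show ?case
  proof (cases "prod_list xs \<le> b")
    case True
    with snoc obtain m where "m \<le> length xs" "prod_list (take m xs) \<le> b" "c * b \<le> prod_list (take m xs)"
      by auto
    then show ?thesis by (intro exI[of _ m]) auto
  next
    case False
    then have "c * b \<le> x * prod_list xs"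
      using snoc.prems(1) assms(1,4) by (intro mult_mono) auto
    then show ?thesis
      using snoc.prems(2) by (intro exI[of _ "length (xs @ [x])"]) (auto simp: mult.commute)
  qed
qed

lemma exists_take_expect_tribes_between:
  assumes "sorted_wrt disjnt Ts" "\<Union>(set Ts) \<subseteq> {..<n}" "\<forall>T\<in>set Ts. 2 \<le> card T"
    and "0 < \<mu>" "(\<Prod>T\<leftarrow>Ts. 1 - (1/2::real) ^ card T) \<le> 1 - \<mu>"
  shows "\<exists>m. \<mu> \<le> expect n (tribes (take m Ts)) \<and> expect n (tribes (take m Ts)) \<le> 3/4 * \<mu> + 1/4"
proof -
  define g where "g T = 1 - (1/2::real) ^ card T" for T :: "nat set"
  have "3/4 \<le> g T" if "T \<in> set Ts" for T
  proof -
    have "(1/2::real) ^ card T \<le> (1/2) ^ 2" using assms(3) that by (intro power_decreasing) auto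
    then show ?thesis unfolding g_def by (simp add: power2_eq_square)
  qed
  moreover have "0 \<le> prod_list (map g Ts)"
    using calculation by (intro prod_list_nonneg) fastforce
  ultimately obtain m where m: "prod_list (map g (take m Ts)) \<le> 1 - \<mu>"
    "3/4 * (1 - \<mu>) \<le> prod_list (map g (take m Ts))"
    using prod_list_take_between[of "3/4" "map g Ts" "1 - \<mu>"] assms(4,5)
    unfolding g_def by (auto simp: take_map)
  have "expect n (tribes (take m Ts)) = 1 - prod_list (map g (take m Ts))"
    unfolding g_def using assms(1,2) by (intro expect_tribes) (auto dest: in_set_takeD)
  then show ?thesis
    using m right_diff_distrib[of "3/4::real" 1 \<mu>] by (intro exI[of _ m]) linarith
qed

theorem theorem1:
  fixes n :: nat and a :: "nat \<Rightarrow> real" and \<alpha> \<mu> :: real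
  assumes "n > 0"
    and "\<forall>j<n. 0 < a j \<and> a j \<le> 1"
    and "\<alpha> = (\<Sum>j<n. a j / (1 - log 2 (a j))) - 2 * ln 2"
    and "0 < \<mu>" and "\<mu> \<le> 1 - exp (- \<alpha> / 8)"
  shows "\<exists>f :: (nat \<Rightarrow> bool) \<Rightarrow> bool.
           \<mu> \<le> expect n f \<and> expect n f \<le> 3/4 * \<mu> + 1/4 \<and>
           (\<forall>j<n. influence n f j < a j)"
proof -
  obtain Ts where Ts: "sorted_wrt disjnt Ts" "\<Union>(set Ts) \<subseteq> {..<n}"
    "\<forall>T\<in>set Ts. 2 \<le> card T \<and> (\<forall>j\<in>T. 1 / 2 ^ (card T - 1) < a j)" "\<alpha> \<le> 8 * tribes_weight Ts"
    using exists_tribes_family[of "{..<n}" a] assms(2,3) by auto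
  have "(\<Prod>T\<leftarrow>Ts. 1 - (1/2::real) ^ card T) \<le> exp (- tribes_weight Ts)"
    by (rule prod_one_minus_le_exp_tribes_weight)
  also have "\<dots> \<le> exp (- \<alpha> / 8)" using Ts(4) by simp
  also have "\<dots> \<le> 1 - \<mu>" using assms(5) by simp
  finally obtain m where m: "\<mu> \<le> expect n (tribes (take m Ts))"
    "expect n (tribes (take m Ts)) \<le> 3/4 * \<mu> + 1/4"
    using exists_take_expect_tribes_between[OF Ts(1,2) _ assms(4)] Ts(3) by blast
  have "set (take m Ts) \<subseteq> set Ts" by (rule set_take_subset)
  then have take: "sorted_wrt disjnt (take m Ts)" "\<Union>(set (take m Ts)) \<subseteq> {..<n}"
    "\<forall>T\<in>set (take m Ts). \<forall>j\<in>T. 1 / 2 ^ (card T - 1) < a j"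
    using Ts(1-3) by (simp, meson Union_mono order_trans, blast)
  have "influence n (tribes (take m Ts)) j < a j" if "j < n" for j
    using influence_tribes_less[OF take] assms(2) that by simp
  with m show ?thesis by (intro exI[of _ "tribes (take m Ts)"]) simp
qed

end
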